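(* Let $\mathcal U$ be a fine Ramsey ultrafilter on $\mathbb N^{<\omega}$. Then the condition $$X\approx Y\iff\{F\in\mathbb N^{<\omega}:S_X(\mathbf x_F)=S_Y(\mathbf x_F)\}\in\mathcal U\qquad(X,Y\in\mathbb W)$$ defines a natural equinumerosity $\approx$ on $\mathbb W$. The corresponding set of numerosities $\mathbb N^{\mathbb N^{<\omega}}/\mathcal U$ is isomorphic to the ultrapower $\mathbb N^{\mathbb N}/\sigma\mathcal U$, where $\sigma:\mathbb N^{<\omega}\to\mathbb N$ is $\sigma(F)=|F|$ and $\sigma\mathcal U=\{A\subseteq\mathbb N:\sigma^{-1}[A]\in\mathcal U\}$. This equinumerosity is characterized by $\mathcal U$-congruences, i.e. for $X,Y\in\mathbb W$, $X\approx Y$ iff there exists a $\mathcal U$-congruence between $X$ and $Y$. Finally, it becomes asymptotic after a suitable reordering of $\mathbb N$: there is a permutation $\pi$ of $\mathbb N$ such that, writing $G_m=\pi[\{0,\dots,m\}]$, for every $S$ in the gauge ideal $\mathfrak I=\{S\in\mathcal R:\ \{F: S(\mathbf x_F)=0\}\in\mathcal U\}$ and every $k$ there is $m$ with $\{0,\dots,k\}\subseteq G_m$ and $S(\mathbf x_{G_m})=0$.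
   Context: Let $\mathbb N=\{0,1,2,\dots\}$, $\mathbb N^{<\omega}$ the set of finite subsets of $\mathbb N$. $\mathbb{W}$ is the family of finitary point sets: sets $A\subseteq\bigcup_{k\ge1}\mathbb N^k$ of finite tuples of natural numbers such that for every $n$ there is $h$ with $A\cap\{0,\dots,n\}^k=\emptyset$ for all $k>h$. Cartesian products are identified with concatenations; $\{n\}$ is the set whose only element is the 1-tuple $(n)$; $A,B\in\mathbb W$ are multipliable if distinct pairs $(a,b)\in A\times B$ have distinct concatenations. Given an equivalence relation $\approx$ on $\mathbb W$, $A\succ B$ (equivalently $B\prec A$) means there exist $A',B'\in\mathbb W$ with $B'\subsetneq A'$, $A\approx A'$, $B\approx B'$. An equinumerosity is an equivalence relation on $\mathbb W$ such that for all $A,B\in\mathbb W$: (AP) $A\approx B$ iff $A\setminus B\approx B\setminus A$; (ZP) exactly one of $A\approx B$, $A\succ B$, $A\prec B$ holds; (TP) if $T$ is injective on $A$ and $T(a)$ is a permutation of the coordinates of $a$ for every $a\in A$, then $A\approx T[A]$; (UP) $A\times\{n\}\approx A$ for all $n$; (PP) if $A,B$ are multipliable, $A',B'$ are multipliable, $A\approx A'$, $B\approx B'$, then $A\times B\approx A'\times B'$. It is natural if whenever $T$ is injective on $X\in\mathbb W$ and the set of components of $T(x)$ equals that of $x$ for all $x\in X$, then $X\approx T[X]$. Series: indeterminates $t_0,t_1,\dots$; $\mathbf A$ the eventually zero sequences $\mathbf a$ of non-negative integers; $t^{\mathbf a}=\prod_it_i^{a_i}$; $\mathcal R$ is the ring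 of formal series $S=\sum n_{\mathbf a}t^{\mathbf a}$ ($n_{\mathbf a}\in\mathbb Z$) for which there are $d_n\in\mathbb N$ with $n_{\mathbf a}=0$ whenever $a_n>d_n$ for some $n$, and $b\in\mathbb N$ with $|n_{\mathbf a}|\le b(\sum_ia_i)!/\prod_ia_i!$. For a tuple $x=(x_1,\dots,x_d)$, $t_x=t^{\mathbf a}$ with $a_i=|\{j:x_j=i\}|$; $S_X=\sum_{x\in X}t_x$, $S_\emptyset=0$. $S(\mathbf x)$ is the value of $S$ when $x_n$ is assigned to $t_n$. For $F\in\mathbb N^{<\omega}$, $\mathbf x_F$ is the $0$-$1$ sequence with $\mathbf x_F(n)=1$ iff $n\in F$; note $S_X(\mathbf x_F)=|X_F|$ where $X_F=X\cap\bigcup_{n}F^n$. An ultrafilter $\mathcal U$ on $\mathbb N^{<\omega}$ is fine if it contains every $\{F:n\in F\}$, $n\in\mathbb N$; it is Ramsey if for every partition of the set of 2-element subsets of $\mathbb N^{<\omega}$ into two classes there is a set in $\mathcal U$ all of whose 2-element subsets lie in the same class. For $X,Y\in\mathbb W$, a $\mathcal U$-congruence between $X$ and $Y$ is an injective map $\tau:X\to Y$ such that $\{F\in\mathbb N^{<\omega}:\tau[X_F]=Y_F\}\in\mathcal U$. *)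

theory Defs
  imports Main "HOL-Library.Multiset"
begin

text \<open>Finite tuples of naturals are lists; the set N^{<omega} of finite subsets of N is
  represented by the finite members of type nat set.\<close>

definition W :: "nat list set set" where
  "W = {A. (\<forall>a\<in>A. a \<noteq> []) \<and>
           (\<forall>n. \<exists>h. \<forall>a\<in>A. set a \<subseteq> {0..n} \<longrightarrow> length a \<le> h)}"

definition cart :: "nat list set \<Rightarrow> nat list set \<Rightarrow> nat list set" where
  "cart A B = {a @ b | a b. a \<in> A \<and> b \<in> B}"

definition sing :: "nat \<Rightarrow> nat list set" where
  "sing n = {[n]}"

definition multipliable :: "nat list set \<Rightarrow> nat list set \<Rightarrow> bool" where
  "multipliable A B \<longleftrightarrow> inj_on (\<lambda>(a, b). a @ b) (A \<times> B)"

definition num_gt :: "(nat list set \<Rightarrow> nat list set \<Rightarrow> bool) \<Rightarrow> nat list set \<Rightarrow> nat list set \<Rightarrow> bool" where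
  "num_gt R A B \<longleftrightarrow> (\<exists>A' B'. A' \<in> W \<and> B' \<in> W \<and> B' \<subset> A' \<and> R A A' \<and> R B B')"

definition equinumerosity :: "(nat list set \<Rightarrow> nat list set \<Rightarrow> bool) \<Rightarrow> bool" where
  "equinumerosity R \<longleftrightarrow>
     \<comment> \<open>equivalence relation on W\<close>
     (\<forall>A\<in>W. R A A) \<and>
     (\<forall>A\<in>W. \<forall>B\<in>W. R A B \<longrightarrow> R B A) \<and>
     (\<forall>A\<in>W. \<forall>B\<in>W. \<forall>C\<in>W. R A B \<longrightarrow> R B C \<longrightarrow> R A C) \<and>
     \<comment> \<open>(AP)\<close>
     (\<forall>A\<in>W. \<forall>B\<in>W. R A B \<longleftrightarrow> R (A - B) (B - A)) \<and>
     \<comment> \<open>(ZP)\<close>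
     (\<forall>A\<in>W. \<forall>B\<in>W.
        (R A B \<and> \<not> num_gt R A B \<and> \<not> num_gt R B A) \<or>
        (\<not> R A B \<and> num_gt R A B \<and> \<not> num_gt R B A) \<or>
        (\<not> R A B \<and> \<not> num_gt R A B \<and> num_gt R B A)) \<and>
     \<comment> \<open>(TP)\<close>
     (\<forall>A\<in>W. \<forall>T. inj_on T A \<and> (\<forall>a\<in>A. mset (T a) = mset a) \<longrightarrow> R A (T ` A)) \<and>
     \<comment> \<open>(UP)\<close>
     (\<forall>A\<in>W. \<forall>n. R (cart A (sing n)) A) \<and>
     \<comment> \<open>(PP)\<close>
     (\<forall>A\<in>W. \<forall>B\<in>W. \<forall>A'\<in>W. \<forall>B'\<in>W.
        multipliable A B \<and> multipliable A' B' \<and> R A A' \<and> R B B' \<longrightarrow>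
        R (cart A B) (cart A' B'))"

definition natural :: "(nat list set \<Rightarrow> nat list set \<Rightarrow> bool) \<Rightarrow> bool" where
  "natural R \<longleftrightarrow>
     (\<forall>X\<in>W. \<forall>T. inj_on T X \<and> (\<forall>x\<in>X. set (T x) = set x) \<longrightarrow> R X (T ` X))"

text \<open>A series is its coefficient function on exponent sequences a :: nat => nat;
  the index set A consists of the eventually zero sequences.\<close>

type_synonym series = "(nat \<Rightarrow> nat) \<Rightarrow> int"

definition supp :: "(nat \<Rightarrow> nat) \<Rightarrow> nat set" where
  "supp a = {i. a i \<noteq> 0}"

definition multinom :: "(nat \<Rightarrow> nat) \<Rightarrow> nat" where
  "multinom a = fact (\<Sum>i\<in>supp a. a i) div (\<Prod>i\<in>supp a. fact (a i))"

definition R_ring :: "series set" where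
  "R_ring = {S. (\<forall>a. \<not> finite (supp a) \<longrightarrow> S a = 0) \<and>
                (\<exists>d::nat \<Rightarrow> nat. \<forall>a. (\<exists>n. a n > d n) \<longrightarrow> S a = 0) \<and>
                (\<exists>b::nat. \<forall>a. finite (supp a) \<longrightarrow> \<bar>S a\<bar> \<le> int (b * multinom a))}"

definition mon_val :: "(nat \<Rightarrow> nat) \<Rightarrow> (nat \<Rightarrow> int) \<Rightarrow> int" where
  "mon_val a x = (\<Prod>i\<in>supp a. x i ^ a i)"

text \<open>Value S(x): sum of the nonzero terms (used only at 0-1 sequences x_F, where it is
  a finite sum for S in R).\<close>
definition series_val :: "series \<Rightarrow> (nat \<Rightarrow> int) \<Rightarrow> int" where
  "series_val S x = (\<Sum>a\<in>{a. finite (supp a) \<and> S a * mon_val a x \<noteq> 0}. S a * mon_val a x)"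

definition xF :: "nat set \<Rightarrow> nat \<Rightarrow> int" where
  "xF F n = (if n \<in> F then 1 else 0)"

definition t_exp :: "nat list \<Rightarrow> nat \<Rightarrow> nat" where
  "t_exp x i = count (mset x) i"

definition S_of :: "nat list set \<Rightarrow> series" where
  "S_of X a = int (card {x\<in>X. t_exp x = a})"

definition ultrafilter_on :: "'a set \<Rightarrow> 'a set set \<Rightarrow> bool" where
  "ultrafilter_on I U \<longleftrightarrow>
     (\<forall>A\<in>U. A \<subseteq> I) \<and> I \<in> U \<and> {} \<notin> U \<and>
     (\<forall>A\<in>U. \<forall>B\<in>U. A \<inter> B \<in> U) \<and>
     (\<forall>A\<in>U. \<forall>B. A \<subseteq> B \<and> B \<subseteq> I \<longrightarrow> B \<in> U) \<and>
     (\<forall>A. A \<subseteq> I \<longrightarrow> A \<in> U \<or> I - A \<in> U)"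

definition Fin :: "nat set set" where
  "Fin = {F. finite F}"

definition fine :: "nat set set set \<Rightarrow> bool" where
  "fine U \<longleftrightarrow> (\<forall>n. {F\<in>Fin. n \<in> F} \<in> U)"

definition ramsey :: "nat set set set \<Rightarrow> bool" where
  "ramsey U \<longleftrightarrow>
     (\<forall>P :: nat set set \<Rightarrow> bool. \<exists>H\<in>U.
        (\<forall>F\<in>H. \<forall>G\<in>H. F \<noteq> G \<longrightarrow> P {F, G}) \<or>
        (\<forall>F\<in>H. \<forall>G\<in>H. F \<noteq> G \<longrightarrow> \<not> P {F, G}))"

definition restr :: "nat list set \<Rightarrow> nat set \<Rightarrow> nat list set" where
  "restr X F = {x\<in>X. set x \<subseteq> F}"

definition U_congruence :: "nat set set set \<Rightarrow> nat list set \<Rightarrow> nat list set \<Rightarrow> (nat list \<Rightarrow> nat list) \<Rightarrow> bool" where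
  "U_congruence U X Y \<tau> \<longleftrightarrow>
     \<tau> ` X \<subseteq> Y \<and> inj_on \<tau> X \<and> {F\<in>Fin. \<tau> ` restr X F = restr Y F} \<in> U"

definition U_eq :: "nat set set set \<Rightarrow> nat list set \<Rightarrow> nat list set \<Rightarrow> bool" where
  "U_eq U X Y \<longleftrightarrow> {F\<in>Fin. series_val (S_of X) (xF F) = series_val (S_of Y) (xF F)} \<in> U"

definition upw_eq :: "nat set set set \<Rightarrow> (nat set \<Rightarrow> nat) \<Rightarrow> (nat set \<Rightarrow> nat) \<Rightarrow> bool" where
  "upw_eq U f g \<longleftrightarrow> {F\<in>Fin. f F = g F} \<in> U"

definition upw_le :: "nat set set set \<Rightarrow> (nat set \<Rightarrow> nat) \<Rightarrow> (nat set \<Rightarrow> nat) \<Rightarrow> bool" where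
  "upw_le U f g \<longleftrightarrow> {F\<in>Fin. f F \<le> g F} \<in> U"

definition sigmaU :: "nat set set set \<Rightarrow> nat set set" where
  "sigmaU U = {A. {F\<in>Fin. card F \<in> A} \<in> U}"

definition upwN_eq :: "nat set set \<Rightarrow> (nat \<Rightarrow> nat) \<Rightarrow> (nat \<Rightarrow> nat) \<Rightarrow> bool" where
  "upwN_eq V h k \<longleftrightarrow> {n. h n = k n} \<in> V"

definition upwN_le :: "nat set set \<Rightarrow> (nat \<Rightarrow> nat) \<Rightarrow> (nat \<Rightarrow> nat) \<Rightarrow> bool" where
  "upwN_le V h k \<longleftrightarrow> {n. h n \<le> k n} \<in> V"

text \<open>An isomorphism of ordered semirings N^{N^{<omega}}/U -> N^N/V, given by a
  representative-level map that is well defined, injective, surjective on classes and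
  respects +, *, <=.\<close>
definition ultrapowers_iso :: "nat set set set \<Rightarrow> nat set set \<Rightarrow> ((nat set \<Rightarrow> nat) \<Rightarrow> (nat \<Rightarrow> nat)) \<Rightarrow> bool" where
  "ultrapowers_iso U V \<Phi> \<longleftrightarrow>
     (\<forall>f g. upw_eq U f g \<longleftrightarrow> upwN_eq V (\<Phi> f) (\<Phi> g)) \<and>
     (\<forall>h. \<exists>f. upwN_eq V (\<Phi> f) h) \<and>
     (\<forall>f g. upwN_eq V (\<Phi> (\<lambda>F. f F + g F)) (\<lambda>n. \<Phi> f n + \<Phi> g n)) \<and>
     (\<forall>f g. upwN_eq V (\<Phi> (\<lambda>F. f F * g F)) (\<lambda>n. \<Phi> f n * \<Phi> g n)) \<and>
     (\<forall>f g. upw_le U f g \<longleftrightarrow> upwN_le V (\<Phi> f) (\<Phi> g))"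

definition gauge_ideal :: "nat set set set \<Rightarrow> series set" where
  "gauge_ideal U = {S\<in>R_ring. {F\<in>Fin. series_val S (xF F) = 0} \<in> U}"

end

theory Submission
  imports Defs "HOL-Library.Infinite_Set"
begin

text \<open>Evaluated at the 0-1 sequence of a finite set F, the series S_X counts the words of X
  whose letters all lie in F, so X \<approx> Y means that X and Y have equally many such words for
  U-almost all F. Because U is fine and Ramsey, every member of U contains the range of an
  exhaustion G 0 \<subset> G 1 \<subset> ... of nat by finite sets which is itself in U. Along such an
  exhaustion X and Y can be compared level by level: this yields the U-congruences, the
  fillings witnessing \<succ> in the comparison axiom, the isomorphism with the ultrapower by
  sigma U (card is injective on a chain), and the permutation enumerating G 0, G 1 - G 0, ...\<close>

section \<open>Counting words inside a finite set\<close>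

lemma finite_restr:
  assumes "X \<in> W" "finite F"
  shows "finite (restr X F)"
proof -
  obtain h where h: "\<forall>a\<in>X. set a \<subseteq> {0..Max F} \<longrightarrow> length a \<le> h"
    using assms(1) unfolding W_def by blast
  moreover have "F \<subseteq> {0..Max F}" using assms(2) by (auto intro: Max_ge)
  ultimately have "restr X F \<subseteq> {xs. set xs \<subseteq> {0..Max F} \<and> length xs \<le> h}"
    unfolding restr_def by auto
  moreover have "finite {xs. set xs \<subseteq> {0..Max F} \<and> length xs \<le> h}"
    by (rule finite_lists_length_le) simp
  ultimately show ?thesis by (rule finite_subset)
qed

lemma W_iff: "A \<in> W \<longleftrightarrow> (\<forall>a\<in>A. a \<noteq> []) \<and> (\<forall>n. finite (restr A {0..n}))"
proof
  assume "(\<forall>a\<in>A. a \<noteq> []) \<and> (\<forall>n. finite (restr A {0..n}))"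
  moreover have "\<forall>a\<in>A. set a \<subseteq> {0..n} \<longrightarrow> length a \<le> Max (length ` restr A {0..n})"
    if "finite (restr A {0..n})" for n
    using that by (auto simp: restr_def)
  ultimately show "A \<in> W" unfolding W_def by blast
qed (auto simp: W_def finite_restr)

lemma W_nonempty_word: "A \<in> W \<Longrightarrow> a \<in> A \<Longrightarrow> a \<noteq> []"
  unfolding W_def by simp

lemma restr_Un: "restr (A \<union> B) F = restr A F \<union> restr B F"
  unfolding restr_def by auto

lemma restr_Diff: "restr (A - B) F = restr A F - restr B F"
  unfolding restr_def by auto

lemma restr_image:
  assumes "\<forall>x\<in>X. set (T x) = set x"
  shows "restr (T ` X) F = T ` restr X F"
  using assms unfolding restr_def by auto

lemma restr_cart: "restr (cart A B) F = (\<lambda>(a, b). a @ b) ` (restr A F \<times> restr B F)"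
  unfolding restr_def cart_def by auto

lemma W_subset: "A \<in> W \<Longrightarrow> B \<subseteq> A \<Longrightarrow> B \<in> W"
  unfolding W_def by (simp add: subset_iff) meson

lemma W_Un: "A \<in> W \<Longrightarrow> B \<in> W \<Longrightarrow> A \<union> B \<in> W"
  unfolding W_iff restr_Un by auto

lemma W_image:
  assumes "X \<in> W" "\<forall>x\<in>X. set (T x) = set x"
  shows "T ` X \<in> W"
  using assms W_nonempty_word[OF assms(1)] finite_restr[OF assms(1)]
  unfolding W_iff restr_image[OF assms(2)] by auto

lemma W_cart:
  assumes "A \<in> W" "B \<in> W"
  shows "cart A B \<in> W"
proof -
  have "\<forall>n. finite (restr (cart A B) {0..n})" using assms by (simp add: restr_cart finite_restr)
  moreover have "\<forall>c\<in>cart A B. c \<noteq> []" using W_nonempty_word[OF assms(1)] by (auto simp: cart_def)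
  ultimately show ?thesis by (simp add: W_iff)
qed

lemma card_restr_image:
  assumes "inj_on T X" "\<forall>x\<in>X. set (T x) = set x"
  shows "card (restr (T ` X) F) = card (restr X F)"
  unfolding restr_image[OF assms(2)]
  by (rule card_image, rule inj_on_subset[OF assms(1)]) (auto simp: restr_def)

lemma card_restr_cart:
  assumes "multipliable A B"
  shows "card (restr (cart A B) F) = card (restr A F) * card (restr B F)"
proof -
  have "inj_on (\<lambda>(a, b). a @ b) (restr A F \<times> restr B F)"
    using assms unfolding multipliable_def by (rule inj_on_subset) (auto simp: restr_def)
  then show ?thesis unfolding restr_cart by (simp add: card_image card_cartesian_product)
qed

lemma card_restr_cart_sing:
  assumes "n \<in> F"
  shows "card (restr (cart A (sing n)) F) = card (restr A F)"
proof -
  have "restr (cart A (sing n)) F = (\<lambda>a. a @ [n]) ` restr A F"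
    using assms unfolding cart_def sing_def restr_def by auto
  then show ?thesis by (simp add: card_image inj_on_def)
qed

lemma mon_val_xF:
  assumes "finite (supp a)"
  shows "mon_val a (xF F) = (if supp a \<subseteq> F then 1 else 0)"
proof (cases "supp a \<subseteq> F")
  case False
  then obtain i where "i \<in> supp a" "i \<notin> F" by blast
  then show ?thesis using assms unfolding mon_val_def
    by (auto simp: xF_def supp_def intro!: prod_zero)
qed (auto simp: mon_val_def xF_def intro!: prod.neutral)

lemma supp_t_exp: "supp (t_exp x) = set x"
  by (auto simp: supp_def t_exp_def)

text \<open>The words of X with exponent vector a all have the letters supp a, so either they all
  lie in restr X F or none does.\<close>
lemma S_of_mult_mon_val_xF:
  assumes "finite (supp a)"
  shows "S_of X a * mon_val a (xF F) =
    (if supp a \<subseteq> F then int (card {x\<in>restr X F. t_exp x = a}) else 0)"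
proof -
  have "{x\<in>X. t_exp x = a} = {x\<in>restr X F. t_exp x = a}" if "supp a \<subseteq> F"
  proof -
    have "set x \<subseteq> F" if "t_exp x = a" for x using that \<open>supp a \<subseteq> F\<close> supp_t_exp[of x] by simp
    then show ?thesis unfolding restr_def by blast
  qed
  then show ?thesis using assms by (simp add: mon_val_xF S_of_def)
qed

lemma series_val_S_of:
  assumes "X \<in> W" "finite F"
  shows "series_val (S_of X) (xF F) = int (card (restr X F))"
proof -
  let ?R = "restr X F"
  have fin: "finite ?R" using finite_restr[OF assms] .
  note summand = S_of_mult_mon_val_xF[of _ X F]
  have support: "{a. finite (supp a) \<and> S_of X a * mon_val a (xF F) \<noteq> 0} = t_exp ` ?R"
  proof (intro set_eqI iffI)
    fix a assume "a \<in> {a. finite (supp a) \<and> S_of X a * mon_val a (xF F) \<noteq> 0}"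
    then have "finite (supp a)" "S_of X a * mon_val a (xF F) \<noteq> 0" by auto
    then have "card {x\<in>?R. t_exp x = a} \<noteq> 0" using summand[of a] by (auto split: if_splits)
    then obtain x where "x \<in> ?R" "t_exp x = a" by (metis (mono_tags) Collect_empty_eq card.empty)
    then show "a \<in> t_exp ` ?R" by blast
  next
    fix a assume "a \<in> t_exp ` ?R"
    then obtain x where x: "x \<in> ?R" "a = t_exp x" by blast
    then have "supp a \<subseteq> F" by (simp add: supp_t_exp restr_def)
    moreover have "card {y\<in>?R. t_exp y = a} \<noteq> 0" using x fin by auto
    ultimately have "S_of X a * mon_val a (xF F) \<noteq> 0"
      using x(2) summand[of a] by (simp add: supp_t_exp)
    then show "a \<in> {a. finite (supp a) \<and> S_of X a * mon_val a (xF F) \<noteq> 0}"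
      using x(2) by (simp add: supp_t_exp)
  qed
  have "series_val (S_of X) (xF F) = (\<Sum>a\<in>t_exp ` ?R. int (card {x\<in>?R. t_exp x = a}))"
    unfolding series_val_def support
  proof (rule sum.cong)
    fix a assume "a \<in> t_exp ` ?R"
    then have "finite (supp a)" "supp a \<subseteq> F" by (auto simp: supp_t_exp restr_def)
    then show "S_of X a * mon_val a (xF F) = int (card {x\<in>?R. t_exp x = a})" using summand by simp
  qed simp
  also have "\<dots> = int (\<Sum>a\<in>t_exp ` ?R. card {x\<in>?R. t_exp x = a})"
    by (simp only: of_nat_sum)
  also have "(\<Sum>a\<in>t_exp ` ?R. card {x\<in>?R. t_exp x = a}) = card ?R"
    using sum.group[OF fin finite_imageI[OF fin] subset_refl, of "\<lambda>_. 1::nat" t_exp]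
    by (simp only: card_eq_sum)
  finally show ?thesis .
qed

lemma card_eq_iff_card_Diff_eq:
  assumes "finite A" "finite B"
  shows "card A = card B \<longleftrightarrow> card (A - B) = card (B - A)"
proof -
  have "card (A - B) = card A - card (A \<inter> B)" "card (B - A) = card B - card (A \<inter> B)"
    using assms by (simp_all add: card_Diff_subset_Int Int_commute)
  moreover have "card (A \<inter> B) \<le> card A" "card (A \<inter> B) \<le> card B"
    using assms by (simp_all add: card_mono)
  ultimately show ?thesis by linarith
qed

section \<open>Exhaustions by finite sets\<close>

definition exhaustion :: "(nat \<Rightarrow> 'a set) \<Rightarrow> bool" where
  "exhaustion G \<longleftrightarrow> strict_mono G \<and> (\<forall>n. finite (G n)) \<and> (\<forall>S. finite S \<longrightarrow> (\<exists>n. S \<subseteq> G n))"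

definition level :: "(nat \<Rightarrow> 'a set) \<Rightarrow> 'a set \<Rightarrow> nat" where
  "level G S = (LEAST n. S \<subseteq> G n)"

lemma exhaustion_mono: "exhaustion G \<Longrightarrow> n \<le> m \<Longrightarrow> G n \<subseteq> G m"
  unfolding exhaustion_def by (simp add: strict_mono_less_eq)

lemma strict_mono_card_exhaustion: "exhaustion G \<Longrightarrow> strict_mono (card \<circ> G)"
  unfolding exhaustion_def strict_mono_def by (simp add: psubset_card_mono)

lemma subset_exhaustion_iff_level:
  assumes "exhaustion G" "finite S"
  shows "S \<subseteq> G m \<longleftrightarrow> level G S \<le> m"
proof
  assume "S \<subseteq> G m"
  then show "level G S \<le> m" unfolding level_def by (rule Least_le)
next
  have "\<exists>n. S \<subseteq> G n" using assms unfolding exhaustion_def by blast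
  then have "S \<subseteq> G (level G S)" unfolding level_def by (rule LeastI_ex)
  moreover assume "level G S \<le> m"
  ultimately show "S \<subseteq> G m" using exhaustion_mono[OF assms(1)] by blast
qed

lemma card_sublevel_Suc:
  fixes f :: "'a \<Rightarrow> nat"
  assumes "finite {x\<in>X. f x \<le> Suc k}"
  shows "card {x\<in>X. f x \<le> Suc k} = card {x\<in>X. f x \<le> k} + card {x\<in>X. f x = Suc k}"
proof -
  have "{x\<in>X. f x \<le> Suc k} = {x\<in>X. f x \<le> k} \<union> {x\<in>X. f x = Suc k}" by auto
  moreover have "finite {x\<in>X. f x \<le> k}" "finite {x\<in>X. f x = Suc k}"
    using assms by (auto elim: finite_subset[rotated])
  ultimately show ?thesis by (simp add: card_Un_disjoint disjoint_iff)
qed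

text \<open>Equal counts of all sublevel sets give equal counts of all level sets, and a
  level-preserving bijection is glued from bijections between the level sets.\<close>
lemma graded_bij:
  fixes f :: "'a \<Rightarrow> nat" and g :: "'b \<Rightarrow> nat"
  assumes fin: "\<And>m. finite {x\<in>X. f x \<le> m}" "\<And>m. finite {y\<in>Y. g y \<le> m}"
    and card: "\<And>m. card {x\<in>X. f x \<le> m} = card {y\<in>Y. g y \<le> m}"
  obtains \<tau> where "bij_betw \<tau> X Y" "\<And>x. x \<in> X \<Longrightarrow> g (\<tau> x) = f x"
proof -
  have "card {x\<in>X. f x = k} = card {y\<in>Y. g y = k}" for k
  proof (cases k)
    case (Suc j)
    then show ?thesis
      using card[of j] card[of k] card_sublevel_Suc[OF fin(1)] card_sublevel_Suc[OF fin(2)] by simp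
  qed (use card[of 0] in simp)
  moreover have "finite {x\<in>X. f x = k}" "finite {y\<in>Y. g y = k}" for k
    using fin[of k] by (auto elim: finite_subset[rotated])
  ultimately have "\<forall>k. \<exists>b. bij_betw b {x\<in>X. f x = k} {y\<in>Y. g y = k}"
    by (metis finite_same_card_bij)
  then obtain b where b: "\<And>k. bij_betw (b k) {x\<in>X. f x = k} {y\<in>Y. g y = k}"
    by metis
  define \<tau> where "\<tau> x = b (f x) x" for x
  have \<tau>: "\<tau> x \<in> Y \<and> g (\<tau> x) = f x" if "x \<in> X" for x
    using bij_betw_apply[OF b, of x "f x"] that unfolding \<tau>_def by simp
  have "inj_on \<tau> X"
  proof (rule inj_onI)
    fix x y assume "x \<in> X" "y \<in> X" "\<tau> x = \<tau> y"
    moreover from this have "f x = f y" using \<tau> by metis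
    ultimately show "x = y"
      using bij_betw_imp_inj_on[OF b, of "f x"] unfolding \<tau>_def by (simp add: inj_on_def)
  qed
  moreover have "Y \<subseteq> \<tau> ` X"
  proof
    fix y assume "y \<in> Y"
    then have "y \<in> b (g y) ` {x\<in>X. f x = g y}" using bij_betw_imp_surj_on[OF b, of "g y"] by simp
    then obtain x where "x \<in> X" "f x = g y" "y = b (g y) x" by auto
    then show "y \<in> \<tau> ` X" unfolding \<tau>_def by force
  qed
  ultimately have "bij_betw \<tau> X Y" using \<tau> by (auto simp: bij_betw_def)
  then show ?thesis using that \<tau> by blast
qed

lemma bij_betw_image_graded:
  assumes "bij_betw \<tau> X Y" "\<And>x. x \<in> X \<Longrightarrow> g (\<tau> x) = f x"
  shows "\<tau> ` {x\<in>X. P (f x)} = {y\<in>Y. P (g y)}"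
  using assms unfolding bij_betw_def by (auto simp flip: assms(2))

text \<open>The permutation enumerates G 0 first, then G 1 - G 0, and so on: it is the
  level-preserving bijection from the exhaustion of nat by initial segments of lengths
  card (G n).\<close>
lemma exhaustion_enumeration:
  assumes G: "exhaustion G"
  obtains \<pi> :: "nat \<Rightarrow> 'a" where "bij \<pi>" "\<And>n. \<pi> ` {..<card (G n)} = G n"
proof -
  define H where "H n = {..<card (G n)}" for n
  have "strict_mono H"
    using strict_mono_card_exhaustion[OF G] unfolding H_def strict_mono_def by (simp add: lessThan_strict_subset_iff)
  moreover have "\<exists>n. S \<subseteq> H n" if fin: "finite S" for S
  proof -
    obtain k where "S \<subseteq> {..<k}" using finite_nat_bounded[OF fin] by blast
    moreover have "k \<le> card (G k)" using strict_mono_imp_increasing[OF strict_mono_card_exhaustion[OF G]] by simp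
    ultimately show ?thesis unfolding H_def by (meson lessThan_subset_iff order_trans)
  qed
  ultimately have H: "exhaustion H" unfolding exhaustion_def H_def by simp
  have sub_H: "{k. level H {k} \<le> m} = H m" and sub_G: "{y. level G {y} \<le> m} = G m" for m
    using subset_exhaustion_iff_level[OF H, of "{_}"] subset_exhaustion_iff_level[OF G, of "{_}"]
    by auto
  have fin_G: "finite (G m)" for m using G unfolding exhaustion_def by blast
  obtain \<pi> where \<pi>: "bij_betw \<pi> UNIV UNIV" "\<And>k. level G {\<pi> k} = level H {k}"
    using graded_bij[of UNIV "\<lambda>k. level H {k}" UNIV "\<lambda>y. level G {y}"] fin_G
    by (simp add: sub_H sub_G) (auto simp: H_def)
  have "\<pi> ` H n = G n" for n
    using bij_betw_image_graded[of \<pi> UNIV UNIV "\<lambda>y. level G {y}" "\<lambda>k. level H {k}" "\<lambda>l. l \<le> n"] \<pi>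
    by (simp add: sub_H sub_G)
  then show ?thesis using that \<pi>(1) unfolding H_def by blast
qed

lemma strict_mono_new_points:
  fixes G :: "nat \<Rightarrow> 'a set"
  assumes "strict_mono G" "G 0 \<noteq> {}"
  obtains p where "\<And>n m. p n \<in> G m \<longleftrightarrow> n \<le> m"
proof -
  have "\<exists>q. q \<in> G n \<and> (\<forall>m<n. q \<notin> G m)" for n
  proof (cases n)
    case (Suc k)
    then obtain q where "q \<in> G n" "q \<notin> G k"
      using strict_monoD[OF assms(1), of k n] by blast
    moreover have "G m \<subseteq> G k" if "m < n" for m
      using that Suc strict_mono_less_eq[OF assms(1)] by simp
    ultimately show ?thesis by blast
  qed (use assms(2) in auto)
  then obtain p where p: "\<And>n. p n \<in> G n \<and> (\<forall>m<n. p n \<notin> G m)" by metis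
  have "p n \<in> G m \<longleftrightarrow> n \<le> m" for n m
    using p[of n] strict_mono_less_eq[OF assms(1), of n m] by (meson not_le subsetD)
  then show ?thesis by (rule that)
qed

definition increment :: "(nat \<Rightarrow> nat) \<Rightarrow> nat \<Rightarrow> nat" where
  "increment e n = (case n of 0 \<Rightarrow> e 0 | Suc k \<Rightarrow> e (Suc k) - e k)"

lemma sum_increment:
  assumes "mono e"
  shows "(\<Sum>n\<le>m. increment e n) = e m"
  by (induction m) (simp_all add: increment_def monoD[OF assms])

text \<open>The filling set: at level n it has increment e n words p n ... p n, where the letter p n
  first appears in G n, with lengths too large for those words to belong to B.\<close>
lemma exhaustion_fill:
  assumes B: "B \<in> W" and G: "exhaustion G" "G 0 \<noteq> {}" and e: "mono e"
  obtains C where "C \<in> W" "C \<inter> B = {}" "\<And>m. card (restr C (G m)) = e m"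
proof -
  have "strict_mono G" using G(1) unfolding exhaustion_def by simp
  then obtain p where p: "\<And>n m. p n \<in> G m \<longleftrightarrow> n \<le> m"
    using strict_mono_new_points G(2) by blast
  have "\<forall>k. \<exists>c. \<forall>a\<in>B. set a \<subseteq> {0..k} \<longrightarrow> length a \<le> c" using B unfolding W_def by blast
  then obtain h where h: "\<And>k a. a \<in> B \<Longrightarrow> set a \<subseteq> {0..k} \<Longrightarrow> length a \<le> h k" by metis
  define J where "J n = {h (p n) <.. h (p n) + increment e n}" for n
  define word where "word = (\<lambda>(n, L). replicate L (p n))"
  define C where "C = word ` (SIGMA n:UNIV. J n)"
  have set_word: "set (word (n, L)) = {p n}" if "L \<in> J n" for n L
    using that unfolding word_def J_def by simp
  have inj_word: "inj_on word (SIGMA n:UNIV. J n)"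
  proof (rule inj_onI, clarify)
    fix n L n' L' assume J: "L \<in> J n" "L' \<in> J n'" and eq: "word (n, L) = word (n', L')"
    have "L = L'" using arg_cong[OF eq, of length] by (simp add: word_def)
    moreover have "p n = p n'" using arg_cong[OF eq, of set] set_word J by simp
    ultimately show "n = n' \<and> L = L'" using p by (metis order_antisym order_refl)
  qed
  have restr_C: "restr C (G m) = word ` (SIGMA n:{..m}. J n)" for m
    unfolding restr_def C_def using set_word p by auto
  have "card (restr C (G m)) = card (SIGMA n:{..m}. J n)" for m
    unfolding restr_C by (rule card_image, rule inj_on_subset[OF inj_word]) auto
  also have "\<dots> m = e m" for m
    by (simp add: J_def sum_increment[OF e])
  finally have card_C: "card (restr C (G m)) = e m" for m .
  have "C \<inter> B = {}"
  proof (rule ccontr)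
    assume "C \<inter> B \<noteq> {}"
    then obtain n L where "L \<in> J n" "word (n, L) \<in> B" unfolding C_def by blast
    moreover have "set (word (n, L)) \<subseteq> {0..p n}" using set_word[OF \<open>L \<in> J n\<close>] by simp
    ultimately have "length (word (n, L)) \<le> h (p n)" using h by blast
    then show False using \<open>L \<in> J n\<close> by (simp add: word_def J_def)
  qed
  moreover have "C \<in> W"
    unfolding W_iff
  proof
    show "\<forall>a\<in>C. a \<noteq> []" using set_word unfolding C_def by fastforce
    show "\<forall>k. finite (restr C {0..k})"
    proof
      fix k
      obtain m where "{0..k} \<subseteq> G m" using G(1) unfolding exhaustion_def by blast
      then have "restr C {0..k} \<subseteq> restr C (G m)" unfolding restr_def by auto
      then show "finite (restr C {0..k})" unfolding restr_C by (rule finite_subset) (auto simp: J_def)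
    qed
  qed
  ultimately show ?thesis using that card_C by blast
qed

lemma chain_enumeration:
  assumes inf: "infinite K" and fin: "\<And>F. F \<in> K \<Longrightarrow> finite F"
    and chain: "\<And>F G. F \<in> K \<Longrightarrow> G \<in> K \<Longrightarrow> F \<subseteq> G \<or> G \<subseteq> F"
  obtains G :: "nat \<Rightarrow> 'a set" where "strict_mono G" "range G = K"
proof -
  have inj: "inj_on card K"
  proof (rule inj_onI)
    fix F G assume FG: "F \<in> K" "G \<in> K" "card F = card G"
    show "F = G"
      using chain[OF FG(1,2)] card_subset_eq[OF fin[OF FG(2)]] card_subset_eq[OF fin[OF FG(1)]] FG(3)
      by auto
  qed
  have inf_card: "infinite (card ` K)" using inf finite_imageD[OF _ inj] by blast
  define G where "G n = inv_into K card (enumerate (card ` K) n)" for n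
  have GK: "G n \<in> K" and card_G: "card (G n) = enumerate (card ` K) n" for n
    unfolding G_def using enumerate_in_set[OF inf_card] by (auto intro: inv_into_into f_inv_into_f)
  have "G n \<subset> G m" if "n < m" for n m
  proof -
    have "card (G n) < card (G m)" unfolding card_G using enumerate_mono[OF that inf_card] .
    then have "\<not> G m \<subseteq> G n" using card_mono[OF fin[OF GK[of n]]] by (meson leD)
    then show ?thesis using chain[OF GK[of n] GK[of m]] by blast
  qed
  then have "strict_mono G" by (rule strict_monoI)
  moreover have "K \<subseteq> range G"
  proof
    fix F assume "F \<in> K"
    then obtain n where "enumerate (card ` K) n = card F" using enumerate_Ex[OF inf_card] by blast
    then have "G n = F" using inj_onD[OF inj _ GK \<open>F \<in> K\<close>] card_G by simp
    then show "F \<in> range G" by blast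
  qed
  then have "range G = K" using GK by auto
  ultimately show ?thesis by (rule that)
qed

section \<open>Fine Ramsey ultrafilters\<close>

locale fine_ramsey_ultrafilter =
  fixes U :: "nat set set set"
  assumes ultrafilter: "ultrafilter_on Fin U" and fine: "fine U" and ramsey: "ramsey U"
begin

lemmas ultrafilter_conjs = ultrafilter[unfolded ultrafilter_on_def]

lemma in_U_subset_Fin: "A \<in> U \<Longrightarrow> A \<subseteq> Fin"
  using ultrafilter_conjs[THEN conjunct1] by blast

lemma Fin_in_U: "Fin \<in> U"
  using ultrafilter_conjs[THEN conjunct2, THEN conjunct1] .

lemma empty_notin_U: "{} \<notin> U"
  using ultrafilter_conjs[THEN conjunct2, THEN conjunct2, THEN conjunct1] .

lemma U_Int: "A \<in> U \<Longrightarrow> B \<in> U \<Longrightarrow> A \<inter> B \<in> U"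
  using ultrafilter_conjs[THEN conjunct2, THEN conjunct2, THEN conjunct2, THEN conjunct1] by blast

lemma U_superset: "A \<in> U \<Longrightarrow> A \<subseteq> B \<Longrightarrow> B \<subseteq> Fin \<Longrightarrow> B \<in> U"
  using ultrafilter_conjs[THEN conjunct2, THEN conjunct2, THEN conjunct2, THEN conjunct2, THEN conjunct1]
  by blast

lemma U_compl: "A \<subseteq> Fin \<Longrightarrow> A \<in> U \<or> Fin - A \<in> U"
  using ultrafilter_conjs[THEN conjunct2, THEN conjunct2, THEN conjunct2, THEN conjunct2, THEN conjunct2]
  by blast

lemma U_Collect: "A \<in> U \<Longrightarrow> (\<And>F. F \<in> A \<Longrightarrow> P F) \<Longrightarrow> {F\<in>Fin. P F} \<in> U"
  by (rule U_superset) (auto dest: in_U_subset_Fin)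

lemma U_Collect_mono:
  "{F\<in>Fin. P F} \<in> U \<Longrightarrow> (\<And>F. finite F \<Longrightarrow> P F \<Longrightarrow> Q F) \<Longrightarrow> {F\<in>Fin. Q F} \<in> U"
  by (rule U_Collect) (auto simp: Fin_def)

lemma U_Collect_conj:
  assumes "{F\<in>Fin. P F} \<in> U" "{F\<in>Fin. Q F} \<in> U"
  shows "{F\<in>Fin. P F \<and> Q F} \<in> U"
proof -
  have "{F\<in>Fin. P F \<and> Q F} = {F\<in>Fin. P F} \<inter> {F\<in>Fin. Q F}" by blast
  then show ?thesis using U_Int[OF assms] by simp
qed

lemma U_Collect_not_iff: "{F\<in>Fin. \<not> P F} \<in> U \<longleftrightarrow> {F\<in>Fin. P F} \<notin> U"
proof
  assume "{F\<in>Fin. \<not> P F} \<in> U"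
  then show "{F\<in>Fin. P F} \<notin> U"
    using U_Collect_conj[of "\<lambda>F. \<not> P F" P] empty_notin_U by auto
next
  assume "{F\<in>Fin. P F} \<notin> U"
  moreover have "Fin - {F\<in>Fin. P F} = {F\<in>Fin. \<not> P F}" by blast
  ultimately show "{F\<in>Fin. \<not> P F} \<in> U"
    using U_compl[of "{F\<in>Fin. P F}"] by auto
qed

lemma U_Collect_disjoint:
  "{F\<in>Fin. P F} \<in> U \<Longrightarrow> (\<And>F. P F \<Longrightarrow> \<not> Q F) \<Longrightarrow> {F\<in>Fin. Q F} \<notin> U"
  using U_Collect_mono[of P "\<lambda>F. \<not> Q F"] U_Collect_not_iff[of Q] by blast

lemma U_trichotomy:
  fixes a b :: "nat set \<Rightarrow> nat"
  defines "eq \<equiv> {F\<in>Fin. a F = b F} \<in> U" and "gt \<equiv> {F\<in>Fin. b F < a F} \<in> U"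
    and "lt \<equiv> {F\<in>Fin. a F < b F} \<in> U"
  shows "(eq \<and> \<not> gt \<and> \<not> lt) \<or> (\<not> eq \<and> gt \<and> \<not> lt) \<or> (\<not> eq \<and> \<not> gt \<and> lt)"
proof -
  have "\<not> (eq \<and> gt)" unfolding eq_def gt_def
    using U_Collect_disjoint[of "\<lambda>F. a F = b F" "\<lambda>F. b F < a F"] by simp
  moreover have "\<not> (eq \<and> lt)" unfolding eq_def lt_def
    using U_Collect_disjoint[of "\<lambda>F. a F = b F" "\<lambda>F. a F < b F"] by simp
  moreover have "\<not> (gt \<and> lt)" unfolding gt_def lt_def
    using U_Collect_disjoint[of "\<lambda>F. b F < a F" "\<lambda>F. a F < b F"] by simp
  moreover have "eq \<or> gt \<or> lt"
  proof (rule ccontr)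
    assume "\<not> (eq \<or> gt \<or> lt)"
    then have "{F\<in>Fin. a F \<noteq> b F} \<in> U" "{F\<in>Fin. \<not> b F < a F} \<in> U" "{F\<in>Fin. \<not> a F < b F} \<in> U"
      unfolding eq_def gt_def lt_def
      using U_Collect_not_iff[of "\<lambda>F. a F = b F"] U_Collect_not_iff[of "\<lambda>F. b F < a F"]
        U_Collect_not_iff[of "\<lambda>F. a F < b F"] by simp_all
    then have "{F\<in>Fin. a F \<noteq> b F \<and> \<not> b F < a F \<and> \<not> a F < b F} \<in> U"
      by (intro U_Collect_conj)
    moreover have "{F\<in>Fin. a F \<noteq> b F \<and> \<not> b F < a F \<and> \<not> a F < b F} = {}" by auto
    ultimately show False using empty_notin_U by simp
  qed
  ultimately show ?thesis by blast
qed

lemma U_supersets: "finite S \<Longrightarrow> {F\<in>Fin. S \<subseteq> F} \<in> U"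
proof (induction S rule: finite_induct)
  case (insert x S)
  then show ?case
    using U_Collect_conj[OF fine[unfolded fine_def, rule_format, of x] insert.IH] by simp
qed (simp add: Fin_in_U)

lemma U_infinite: "A \<in> U \<Longrightarrow> infinite A"
proof
  assume A: "A \<in> U" "finite A"
  then have "finite (\<Union>A)" using in_U_subset_Fin by (auto simp: Fin_def)
  then obtain n where "n \<notin> \<Union>A" using ex_new_if_finite[OF infinite_UNIV_nat] by blast
  then have "{F\<in>Fin. {n} \<subseteq> F} \<inter> A = {}" by blast
  then show False using U_Int[OF U_supersets A(1), of "{n}"] empty_notin_U by simp
qed

text \<open>A set in U homogeneous for incomparability is impossible: the proper supersets of any
  of its members in it form an infinite set, as U contains all supersets of a finite set.\<close>
lemma U_chain: "\<exists>H\<in>U. \<forall>F\<in>H. \<forall>G\<in>H. F \<subseteq> G \<or> G \<subseteq> F"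
proof -
  define comparable where "comparable S \<longleftrightarrow> (\<forall>F\<in>S. \<forall>G\<in>S. F \<subseteq> G \<or> G \<subseteq> F)" for S :: "nat set set"
  obtain H where H: "H \<in> U" and hom:
    "(\<forall>F\<in>H. \<forall>G\<in>H. F \<noteq> G \<longrightarrow> comparable {F, G}) \<or>
     (\<forall>F\<in>H. \<forall>G\<in>H. F \<noteq> G \<longrightarrow> \<not> comparable {F, G})"
    using ramsey[unfolded ramsey_def, THEN spec, of comparable] by blast
  obtain F where F: "F \<in> H" using H empty_notin_U by (metis ex_in_conv)
  then have "H \<inter> {G\<in>Fin. F \<subseteq> G} \<in> U"
    using U_Int[OF H U_supersets] in_U_subset_Fin[OF H] by (auto simp: Fin_def)
  then have "infinite (H \<inter> {G\<in>Fin. F \<subseteq> G} - {F})" using U_infinite by simp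
  then obtain G where "G \<in> H" "F \<subseteq> G" "G \<noteq> F" using infinite_imp_nonempty by blast
  then have chain: "\<forall>F\<in>H. \<forall>G\<in>H. F \<noteq> G \<longrightarrow> comparable {F, G}"
    using hom F unfolding comparable_def by blast
  have "F' \<subseteq> G' \<or> G' \<subseteq> F'" if "F' \<in> H" "G' \<in> H" for F' G'
    using chain that unfolding comparable_def by (cases "F' = G'") auto
  then show ?thesis using H by blast
qed

lemma exhaustion_in_U:
  assumes Q: "Q \<in> U"
  obtains G where "exhaustion G" "range G \<subseteq> Q" "range G \<in> U"
proof -
  obtain H where H: "H \<in> U" and chain: "\<forall>F\<in>H. \<forall>G\<in>H. F \<subseteq> G \<or> G \<subseteq> F"
    using U_chain by blast
  define K where "K = H \<inter> Q"
  have K: "K \<in> U" unfolding K_def using U_Int[OF H Q] .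
  have fin: "finite F" if "F \<in> K" for F using in_U_subset_Fin[OF K] that by (auto simp: Fin_def)
  have comparable: "F \<subseteq> G \<or> G \<subseteq> F" if "F \<in> K" "G \<in> K" for F G
    using chain that unfolding K_def by blast
  obtain G :: "nat \<Rightarrow> nat set" where G: "strict_mono G" "range G = K"
    using chain_enumeration[OF U_infinite[OF K] fin comparable] by blast
  have "\<exists>n. S \<subseteq> G n" if "finite S" for S
  proof -
    have "{F\<in>Fin. S \<subseteq> F} \<inter> K \<in> U" using U_Int[OF U_supersets[OF that] K] .
    then obtain F where "F \<in> {F\<in>Fin. S \<subseteq> F} \<inter> K" using empty_notin_U by (metis ex_in_conv)
    then show ?thesis using G(2) by blast
  qed
  moreover have "finite (G n)" for n using fin G(2) by blast
  ultimately have "exhaustion G" unfolding exhaustion_def using G(1) by blast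
  moreover have "range G \<subseteq> Q" "range G \<in> U" using G(2) K unfolding K_def by auto
  ultimately show ?thesis by (rule that)
qed

text \<open>By Ramsey's property, d increases along all pairs of the exhaustion or decreases
  strictly along all of them, and the latter would be an infinite descent.\<close>
lemma exhaustion_in_U_mono:
  fixes d :: "nat set \<Rightarrow> nat"
  assumes Q: "Q \<in> U"
  obtains G where "exhaustion G" "range G \<subseteq> Q" "range G \<in> U" "mono (d \<circ> G)"
proof -
  define up where "up S \<longleftrightarrow> (\<forall>F\<in>S. \<forall>G\<in>S. F \<subset> G \<longrightarrow> d F \<le> d G)" for S
  obtain H where H: "H \<in> U" and hom: "(\<forall>F\<in>H. \<forall>G\<in>H. F \<noteq> G \<longrightarrow> up {F, G}) \<or>
      (\<forall>F\<in>H. \<forall>G\<in>H. F \<noteq> G \<longrightarrow> \<not> up {F, G})"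
    using ramsey[unfolded ramsey_def, THEN spec, of up] by blast
  obtain G where G: "exhaustion G" "range G \<subseteq> Q \<inter> H" "range G \<in> U"
    using exhaustion_in_U[OF U_Int[OF Q H]] by blast
  have step: "G n \<subset> G (Suc n)" and GH: "G n \<in> H" for n
    using G(1,2) unfolding exhaustion_def by (auto simp: strict_mono_Suc_iff)
  have "\<forall>F\<in>H. \<forall>G\<in>H. F \<noteq> G \<longrightarrow> up {F, G}"
  proof (rule ccontr)
    assume "\<not> ?thesis"
    then have down: "\<not> up {G n, G (Suc n)}" for n using hom GH step[of n] by blast
    have "d (G (Suc n)) < d (G n)" for n
      using down[of n] step[of n] unfolding up_def by auto
    then show False
      using wf_less_than[unfolded wf_iff_no_infinite_down_chain, simplified, THEN spec, of "d \<circ> G"]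
      by simp
  qed
  then have "d (G n) \<le> d (G (Suc n))" for n using GH step[of n] unfolding up_def by blast
  then have "mono (d \<circ> G)" by (simp add: mono_iff_le_Suc)
  moreover have "range G \<subseteq> Q" using G(2) by blast
  ultimately show ?thesis using G(1,3) that by blast
qed

lemma U_Collect_range:
  "range G \<in> U \<Longrightarrow> (\<And>n. P (G n)) \<Longrightarrow> {F\<in>Fin. P F} \<in> U"
  by (rule U_Collect) blast+

section \<open>The equinumerosity induced by a fine Ramsey ultrafilter\<close>

lemma U_eq_iff_card:
  assumes "X \<in> W" "Y \<in> W"
  shows "U_eq U X Y \<longleftrightarrow> {F\<in>Fin. card (restr X F) = card (restr Y F)} \<in> U"
proof -
  have "{F\<in>Fin. series_val (S_of X) (xF F) = series_val (S_of Y) (xF F)} =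
        {F\<in>Fin. card (restr X F) = card (restr Y F)}"
  proof (rule Collect_cong)
    fix F
    show "(F \<in> Fin \<and> series_val (S_of X) (xF F) = series_val (S_of Y) (xF F)) \<longleftrightarrow>
          (F \<in> Fin \<and> card (restr X F) = card (restr Y F))"
      by (cases "finite F") (simp_all add: Fin_def series_val_S_of assms)
  qed
  then show ?thesis unfolding U_eq_def by simp
qed

lemma U_eq_cardI:
  assumes "X \<in> W" "Y \<in> W" "{F\<in>Fin. P F} \<in> U"
    and "\<And>F. finite F \<Longrightarrow> P F \<Longrightarrow> card (restr X F) = card (restr Y F)"
  shows "U_eq U X Y"
  using U_Collect_mono[OF assms(3), of "\<lambda>F. card (restr X F) = card (restr Y F)"] assms(4)
    U_eq_iff_card[OF assms(1,2)] by blast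

lemma num_gt_imp_card_less:
  assumes A: "A \<in> W" and B: "B \<in> W" and gt: "num_gt (U_eq U) A B"
  shows "{F\<in>Fin. card (restr B F) < card (restr A F)} \<in> U"
proof -
  obtain A' B' where W: "A' \<in> W" "B' \<in> W" and "B' \<subset> A'" and "U_eq U A A'" "U_eq U B B'"
    using gt unfolding num_gt_def by blast
  then obtain x where x: "x \<in> A'" "x \<notin> B'" by blast
  have "{F\<in>Fin. card (restr A F) = card (restr A' F)} \<in> U"
    "{F\<in>Fin. card (restr B F) = card (restr B' F)} \<in> U"
    using \<open>U_eq U A A'\<close> \<open>U_eq U B B'\<close> U_eq_iff_card A B W by blast+
  then have "{F\<in>Fin. card (restr A F) = card (restr A' F) \<and>
      card (restr B F) = card (restr B' F) \<and> set x \<subseteq> F} \<in> U"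
    by (intro U_Collect_conj U_supersets) simp_all
  then show ?thesis
  proof (rule U_Collect_mono, elim conjE)
    fix F :: "nat set" assume "finite F" "set x \<subseteq> F"
    then have "restr B' F \<subset> restr A' F" using \<open>B' \<subset> A'\<close> x unfolding restr_def by auto
    then have "card (restr B' F) < card (restr A' F)" by (rule psubset_card_mono[OF finite_restr[OF W(1) \<open>finite F\<close>]])
    moreover assume "card (restr A F) = card (restr A' F)" "card (restr B F) = card (restr B' F)"
    ultimately show "card (restr B F) < card (restr A F)" by simp
  qed
qed

text \<open>Conversely, along an exhaustion on which the surplus d of A over B grows, B is
  enlarged to B \<union> C with C disjoint from B filling exactly that surplus.\<close>
lemma card_less_imp_num_gt:
  assumes A: "A \<in> W" and B: "B \<in> W"
    and less: "{F\<in>Fin. card (restr B F) < card (restr A F)} \<in> U"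
  shows "num_gt (U_eq U) A B"
proof -
  define d where "d F = card (restr A F) - card (restr B F)" for F
  obtain G where G: "exhaustion G" "range G \<subseteq> {F\<in>Fin. card (restr B F) < card (restr A F)}"
    "range G \<in> U" "mono (d \<circ> G)"
    using exhaustion_in_U_mono[OF less] by blast
  have less_G: "card (restr B (G n)) < card (restr A (G n))" for n using G(2) by blast
  have "restr A {} = {}" using W_nonempty_word[OF A] unfolding restr_def by auto
  then have "G 0 \<noteq> {}" using less_G[of 0] by auto
  then obtain C where C: "C \<in> W" "C \<inter> B = {}" "\<And>m. card (restr C (G m)) = d (G m)"
    using exhaustion_fill[OF B G(1) _ G(4)] by auto
  have "C \<noteq> {}" using C(3)[of 0] less_G[of 0] unfolding d_def by (auto simp: restr_def)
  then have "B \<subset> B \<union> C" using C(2) by blast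
  have "card (restr (B \<union> C) (G n)) = card (restr A (G n))" for n
  proof -
    have "finite (G n)" using G(1) unfolding exhaustion_def by blast
    then have "card (restr (B \<union> C) (G n)) = card (restr B (G n)) + card (restr C (G n))"
      using finite_restr[OF B] finite_restr[OF C(1)] C(2) unfolding restr_Un
      by (intro card_Un_disjoint) (auto simp: restr_def)
    then show ?thesis using C(3) less_G[of n] unfolding d_def by simp
  qed
  then have "{F\<in>Fin. card (restr A F) = card (restr (B \<union> C) F)} \<in> U"
    by (intro U_Collect_range[OF G(3)]) simp
  then have "U_eq U A (B \<union> C)" by (rule U_eq_cardI[OF A W_Un[OF B C(1)]])
  moreover have "U_eq U B B" using U_eq_iff_card[OF B B] Fin_in_U by simp
  ultimately show ?thesis unfolding num_gt_def using W_Un[OF B C(1)] B \<open>B \<subset> B \<union> C\<close> by blast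
qed

lemma num_gt_iff_card_less:
  "A \<in> W \<Longrightarrow> B \<in> W \<Longrightarrow> num_gt (U_eq U) A B \<longleftrightarrow> {F\<in>Fin. card (restr B F) < card (restr A F)} \<in> U"
  using num_gt_imp_card_less card_less_imp_num_gt by blast

lemma U_eq_refl: "X \<in> W \<Longrightarrow> U_eq U X X"
  using U_eq_iff_card Fin_in_U by simp

lemma U_eq_sym:
  assumes "X \<in> W" "Y \<in> W" "U_eq U X Y"
  shows "U_eq U Y X"
  using assms U_eq_cardI[OF assms(2,1), of "\<lambda>F. card (restr X F) = card (restr Y F)"]
  by (simp add: U_eq_iff_card)

lemma U_eq_trans:
  assumes "X \<in> W" "Y \<in> W" "Z \<in> W" "U_eq U X Y" "U_eq U Y Z"
  shows "U_eq U X Z"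
proof (rule U_eq_cardI[OF assms(1,3)])
  show "{F\<in>Fin. card (restr X F) = card (restr Y F) \<and> card (restr Y F) = card (restr Z F)} \<in> U"
    using assms by (intro U_Collect_conj) (simp_all add: U_eq_iff_card)
qed simp

lemma U_eq_iff_Diff:
  assumes "A \<in> W" "B \<in> W"
  shows "U_eq U A B \<longleftrightarrow> U_eq U (A - B) (B - A)"
proof -
  have "{F\<in>Fin. card (restr A F) = card (restr B F)} =
        {F\<in>Fin. card (restr (A - B) F) = card (restr (B - A) F)}"
  proof (rule Collect_cong)
    fix F
    show "F \<in> Fin \<and> card (restr A F) = card (restr B F) \<longleftrightarrow>
          F \<in> Fin \<and> card (restr (A - B) F) = card (restr (B - A) F)"
      unfolding restr_Diff
      using card_eq_iff_card_Diff_eq[OF finite_restr[OF assms(1), of F] finite_restr[OF assms(2), of F]]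
      by (auto simp: Fin_def)
  qed
  moreover have "A - B \<in> W" "B - A \<in> W" using assms W_subset by blast+
  ultimately show ?thesis using U_eq_iff_card assms by presburger
qed

lemma U_eq_trichotomy:
  assumes "A \<in> W" "B \<in> W"
  shows "(U_eq U A B \<and> \<not> num_gt (U_eq U) A B \<and> \<not> num_gt (U_eq U) B A) \<or>
    (\<not> U_eq U A B \<and> num_gt (U_eq U) A B \<and> \<not> num_gt (U_eq U) B A) \<or>
    (\<not> U_eq U A B \<and> \<not> num_gt (U_eq U) A B \<and> num_gt (U_eq U) B A)"
  using U_trichotomy[of "\<lambda>F. card (restr A F)" "\<lambda>F. card (restr B F)"]
  unfolding U_eq_iff_card[OF assms] num_gt_iff_card_less[OF assms] num_gt_iff_card_less[OF assms(2,1)] .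

lemma U_eq_image:
  assumes "X \<in> W" "inj_on T X" "\<forall>x\<in>X. set (T x) = set x"
  shows "U_eq U X (T ` X)"
  by (rule U_eq_cardI[OF assms(1) W_image[OF assms(1,3)], where P = "\<lambda>_. True"])
    (simp_all add: Fin_in_U card_restr_image[OF assms(2,3)])

lemma U_eq_cart_sing:
  assumes "A \<in> W"
  shows "U_eq U (cart A (sing n)) A"
proof -
  have sing: "sing n \<in> W" unfolding W_def sing_def by (auto intro: exI[of _ 1])
  show ?thesis
    by (rule U_eq_cardI[OF W_cart[OF assms sing] assms, where P = "\<lambda>F. n \<in> F"])
      (use fine in \<open>simp_all add: fine_def card_restr_cart_sing\<close>)
qed

lemma U_eq_cart:
  assumes W: "A \<in> W" "B \<in> W" "A' \<in> W" "B' \<in> W"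
    and mult: "multipliable A B" "multipliable A' B'" and eq: "U_eq U A A'" "U_eq U B B'"
  shows "U_eq U (cart A B) (cart A' B')"
proof (rule U_eq_cardI[OF W_cart[OF W(1,2)] W_cart[OF W(3,4)]])
  show "{F\<in>Fin. card (restr A F) = card (restr A' F) \<and> card (restr B F) = card (restr B' F)} \<in> U"
    using eq W by (intro U_Collect_conj) (simp_all add: U_eq_iff_card)
qed (simp add: card_restr_cart mult)

lemma equinumerosity_U_eq: "equinumerosity (U_eq U)"
  unfolding equinumerosity_def
proof (intro conjI)
  show "\<forall>A\<in>W. U_eq U A A" using U_eq_refl by blast
  show "\<forall>A\<in>W. \<forall>B\<in>W. U_eq U A B \<longrightarrow> U_eq U B A" using U_eq_sym by blast
  show "\<forall>A\<in>W. \<forall>B\<in>W. \<forall>C\<in>W. U_eq U A B \<longrightarrow> U_eq U B C \<longrightarrow> U_eq U A C"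
    using U_eq_trans by blast
  show "\<forall>A\<in>W. \<forall>B\<in>W. U_eq U A B \<longleftrightarrow> U_eq U (A - B) (B - A)" using U_eq_iff_Diff by blast
  show "\<forall>A\<in>W. \<forall>B\<in>W.
      (U_eq U A B \<and> \<not> num_gt (U_eq U) A B \<and> \<not> num_gt (U_eq U) B A) \<or>
      (\<not> U_eq U A B \<and> num_gt (U_eq U) A B \<and> \<not> num_gt (U_eq U) B A) \<or>
      (\<not> U_eq U A B \<and> \<not> num_gt (U_eq U) A B \<and> num_gt (U_eq U) B A)"
    by (intro ballI) (rule U_eq_trichotomy)
  show "\<forall>A\<in>W. \<forall>T. inj_on T A \<and> (\<forall>a\<in>A. mset (T a) = mset a) \<longrightarrow> U_eq U A (T ` A)"
    using U_eq_image mset_eq_setD by blast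
  show "\<forall>A\<in>W. \<forall>n. U_eq U (cart A (sing n)) A" using U_eq_cart_sing by blast
  show "\<forall>A\<in>W. \<forall>B\<in>W. \<forall>A'\<in>W. \<forall>B'\<in>W.
      multipliable A B \<and> multipliable A' B' \<and> U_eq U A A' \<and> U_eq U B B' \<longrightarrow>
      U_eq U (cart A B) (cart A' B')"
    using U_eq_cart by blast
qed

lemma natural_U_eq: "natural (U_eq U)"
  unfolding natural_def using U_eq_image by blast

lemma U_congruence_imp_U_eq:
  assumes "X \<in> W" "Y \<in> W" "U_congruence U X Y \<tau>"
  shows "U_eq U X Y"
proof (rule U_eq_cardI[OF assms(1,2)])
  show "{F\<in>Fin. \<tau> ` restr X F = restr Y F} \<in> U" using assms(3) unfolding U_congruence_def by blast
  fix F assume "\<tau> ` restr X F = restr Y F"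
  moreover have "inj_on \<tau> (restr X F)"
    using assms(3) unfolding U_congruence_def restr_def by (blast intro: inj_on_subset)
  ultimately show "card (restr X F) = card (restr Y F)" using card_image by metis
qed

text \<open>Along an exhaustion G on which X and Y have equally many words, sort the words by
  the first level of G containing all their letters; a level-preserving bijection is then
  a U-congruence.\<close>
lemma U_eq_imp_U_congruence:
  assumes X: "X \<in> W" and Y: "Y \<in> W" and eq: "U_eq U X Y"
  obtains \<tau> where "U_congruence U X Y \<tau>"
proof -
  have "{F\<in>Fin. card (restr X F) = card (restr Y F)} \<in> U" using eq U_eq_iff_card[OF X Y] by simp
  then obtain G where G: "exhaustion G" "range G \<subseteq> {F\<in>Fin. card (restr X F) = card (restr Y F)}"
    "range G \<in> U"
    by (rule exhaustion_in_U)
  have sublevel: "restr Z (G m) = {x\<in>Z. level G (set x) \<le> m}" for Z m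
    unfolding restr_def by (simp add: subset_exhaustion_iff_level[OF G(1)])
  have finite_G: "finite (G m)" for m using G(1) unfolding exhaustion_def by simp
  have fin: "finite {x\<in>Z. level G (set x) \<le> m}" if "Z \<in> W" for Z m
    using finite_restr[OF that finite_G] by (simp only: sublevel)
  have "card (restr X (G m)) = card (restr Y (G m))" for m
    using G(2) unfolding image_subset_iff by simp
  then have "card {x\<in>X. level G (set x) \<le> m} = card {y\<in>Y. level G (set y) \<le> m}" for m
    unfolding sublevel .
  then obtain \<tau> where \<tau>: "bij_betw \<tau> X Y" "\<And>x. x \<in> X \<Longrightarrow> level G (set (\<tau> x)) = level G (set x)"
    using graded_bij[OF fin[OF X] fin[OF Y]] by blast
  have "\<tau> ` restr X (G m) = restr Y (G m)" for m
    unfolding sublevel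
    by (rule bij_betw_image_graded[where g = "\<lambda>y. level G (set y)" and f = "\<lambda>x. level G (set x)", OF \<tau>])
  then have "{F\<in>Fin. \<tau> ` restr X F = restr Y F} \<in> U" by (intro U_Collect_range[OF G(3)])
  then have "U_congruence U X Y \<tau>"
    using \<tau>(1) unfolding U_congruence_def bij_betw_def by blast
  then show ?thesis by (rule that)
qed

lemma U_eq_iff_U_congruence:
  assumes "X \<in> W" "Y \<in> W"
  shows "U_eq U X Y \<longleftrightarrow> (\<exists>\<tau>. U_congruence U X Y \<tau>)"
proof
  assume "U_eq U X Y"
  with assms obtain \<tau> where "U_congruence U X Y \<tau>" by (rule U_eq_imp_U_congruence)
  then show "\<exists>\<tau>. U_congruence U X Y \<tau>" by blast
qed (use assms U_congruence_imp_U_eq in blast)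

lemma sigmaU_transfer:
  assumes K: "K \<in> U" "inj_on card K"
  shows "{n. P (inv_into K card n)} \<in> sigmaU U \<longleftrightarrow> {F\<in>Fin. P F} \<in> U"
proof -
  have agree: "P (inv_into K card (card F)) = P F" if "F \<in> K" for F
    using inv_into_f_f[OF K(2) that] by simp
  have "{F\<in>Fin. P (inv_into K card (card F))} \<in> U \<longleftrightarrow> {F\<in>Fin. P F} \<in> U"
  proof
    assume "{F\<in>Fin. P (inv_into K card (card F))} \<in> U"
    from U_Int[OF this K(1)] show "{F\<in>Fin. P F} \<in> U" by (rule U_Collect) (use agree in blast)
  next
    assume "{F\<in>Fin. P F} \<in> U"
    from U_Int[OF this K(1)] show "{F\<in>Fin. P (inv_into K card (card F))} \<in> U"
      by (rule U_Collect) (use agree in blast)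
  qed
  then show ?thesis unfolding sigmaU_def by simp
qed

text \<open>The map is precomposition with a section of card on a chain in U: on a chain,
  card is injective, so sigma U-classes of sequences on nat correspond to U-classes.\<close>
lemma ultrapowers_iso_sigmaU: "\<exists>\<Phi>. ultrapowers_iso U (sigmaU U) \<Phi>"
proof -
  obtain G where G: "exhaustion G" "range G \<in> U" using exhaustion_in_U[OF Fin_in_U] by blast
  have inj: "inj_on card (range G)"
  proof (rule inj_onI, clarify)
    fix a b assume "card (G a) = card (G b)"
    then show "G a = G b" using strict_mono_eq[OF strict_mono_card_exhaustion[OF G(1)], of a b] by simp
  qed
  define g where "g = inv_into (range G) card"
  note transfer = sigmaU_transfer[OF G(2) inj, folded g_def]
  define \<Phi> where "\<Phi> f = (\<lambda>n. f (g n))" for f :: "nat set \<Rightarrow> nat"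
  have eq: "upw_eq U f f' \<longleftrightarrow> upwN_eq (sigmaU U) (\<Phi> f) (\<Phi> f')" for f f'
    unfolding upw_eq_def upwN_eq_def \<Phi>_def using transfer[of "\<lambda>F. f F = f' F"] by simp
  have le: "upw_le U f f' \<longleftrightarrow> upwN_le (sigmaU U) (\<Phi> f) (\<Phi> f')" for f f'
    unfolding upw_le_def upwN_le_def \<Phi>_def using transfer[of "\<lambda>F. f F \<le> f' F"] by simp
  have univ: "UNIV \<in> sigmaU U" unfolding sigmaU_def using Fin_in_U by simp
  have "upwN_eq (sigmaU U) (\<Phi> (\<lambda>F. h (card F))) h" for h
  proof -
    have "{F\<in>Fin. h (card (g (card F))) = h (card F)} \<in> U"
      by (rule U_Collect_range[OF G(2)]) (simp add: g_def inv_into_f_f[OF inj])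
    then show ?thesis unfolding upwN_eq_def \<Phi>_def sigmaU_def by simp
  qed
  then have surj: "\<forall>h. \<exists>f. upwN_eq (sigmaU U) (\<Phi> f) h" by blast
  have "ultrapowers_iso U (sigmaU U) \<Phi>"
    unfolding ultrapowers_iso_def using eq le surj univ by (simp add: upwN_eq_def \<Phi>_def)
  then show ?thesis by blast
qed

lemma gauge_ideal_zero_along_permutation:
  "\<exists>\<pi>::nat \<Rightarrow> nat. bij \<pi> \<and>
     (\<forall>S\<in>gauge_ideal U. \<forall>k. \<exists>m. {0..k} \<subseteq> \<pi> ` {0..m} \<and> series_val S (xF (\<pi> ` {0..m})) = 0)"
proof -
  obtain G where G: "exhaustion G" "range G \<in> U" using exhaustion_in_U[OF Fin_in_U] by blast
  obtain \<pi> :: "nat \<Rightarrow> nat" where \<pi>: "bij \<pi>" "\<And>n. \<pi> ` {..<card (G n)} = G n"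
    using exhaustion_enumeration[OF G(1)] by blast
  have "\<exists>m. {0..k} \<subseteq> \<pi> ` {0..m} \<and> series_val S (xF (\<pi> ` {0..m})) = 0"
    if "S \<in> gauge_ideal U" for S k
  proof -
    have "{F\<in>Fin. series_val S (xF F) = 0 \<and> {0..k} \<subseteq> F} \<inter> range G \<in> U"
      using that U_Collect_conj U_supersets U_Int[OF _ G(2)] unfolding gauge_ideal_def by simp
    then obtain F where "F \<in> {F\<in>Fin. series_val S (xF F) = 0 \<and> {0..k} \<subseteq> F} \<inter> range G"
      using empty_notin_U by (metis ex_in_conv)
    then obtain n where n: "series_val S (xF (G n)) = 0" "{0..k} \<subseteq> G n" by blast
    have "G n \<noteq> {}" "finite (G n)" using n(2) G(1) unfolding exhaustion_def by auto
    then have "card (G n) > 0" by (simp add: card_gt_0_iff)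
    then have "{0..card (G n) - 1} = {..<card (G n)}" by auto
    then show ?thesis using n \<pi>(2)[of n] by metis
  qed
  then show ?thesis using \<pi>(1) by blast
qed

end

theorem corollary3p2:
  fixes U :: "nat set set set"
  assumes "ultrafilter_on Fin U" and "fine U" and "ramsey U"
  shows "equinumerosity (U_eq U) \<and> natural (U_eq U)
     \<and> (\<exists>\<Phi>. ultrapowers_iso U (sigmaU U) \<Phi>)
     \<and> (\<forall>X\<in>W. \<forall>Y\<in>W. U_eq U X Y \<longleftrightarrow> (\<exists>\<tau>. U_congruence U X Y \<tau>))
     \<and> (\<exists>\<pi>::nat \<Rightarrow> nat. bij \<pi> \<and>
          (\<forall>S\<in>gauge_ideal U. \<forall>k. \<exists>m.
              {0..k} \<subseteq> \<pi> ` {0..m} \<and> series_val S (xF (\<pi> ` {0..m})) = 0))"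
proof -
  interpret fine_ramsey_ultrafilter U using assms by unfold_locales
  show ?thesis
    using equinumerosity_U_eq natural_U_eq ultrapowers_iso_sigmaU U_eq_iff_U_congruence
      gauge_ideal_zero_along_permutation by blast
qed

end
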